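(* Let $G$ be a connected graph of order at least three. If $G$ has an independent $\gamma$-set that contains no leaf of $G$, then $\gamma(G)=\gamma_{\rm cer}(G)$.
   Context: All graphs are finite and simple. A set $D\subseteq V_G$ is a dominating set of $G$ if every vertex of $V_G-D$ has a neighbor in $D$; $\gamma(G)$ is the minimum cardinality of a dominating set, and a $\gamma$-set is a dominating set of cardinality $\gamma(G)$. A set $D\subseteq V_G$ is a certified dominating set of $G$ if $D$ is a dominating set of $G$ and every vertex of $D$ has either zero or at least two neighbors in $V_G-D$; $\gamma_{\rm cer}(G)$ is the minimum cardinality of a certified dominating set of $G$. A leaf is a vertex of degree one. *)

theory Defs
  imports Main
begin

definition simple_graph :: "'a set \<Rightarrow> ('a \<Rightarrow> 'a \<Rightarrow> bool) \<Rightarrow> bool" where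
  "simple_graph V E \<longleftrightarrow> finite V \<and> (\<forall>u v. E u v \<longrightarrow> E v u) \<and> (\<forall>v. \<not> E v v)
     \<and> (\<forall>u v. E u v \<longrightarrow> u \<in> V \<and> v \<in> V)"

definition connected_graph :: "'a set \<Rightarrow> ('a \<Rightarrow> 'a \<Rightarrow> bool) \<Rightarrow> bool" where
  "connected_graph V E \<longleftrightarrow> V \<noteq> {} \<and> (\<forall>u\<in>V. \<forall>v\<in>V. E\<^sup>*\<^sup>* u v)"

definition neighbors :: "'a set \<Rightarrow> ('a \<Rightarrow> 'a \<Rightarrow> bool) \<Rightarrow> 'a \<Rightarrow> 'a set" where
  "neighbors V E v = {u \<in> V. E v u}"

definition degree :: "'a set \<Rightarrow> ('a \<Rightarrow> 'a \<Rightarrow> bool) \<Rightarrow> 'a \<Rightarrow> nat" where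
  "degree V E v = card (neighbors V E v)"

definition is_leaf :: "'a set \<Rightarrow> ('a \<Rightarrow> 'a \<Rightarrow> bool) \<Rightarrow> 'a \<Rightarrow> bool" where
  "is_leaf V E v \<longleftrightarrow> v \<in> V \<and> degree V E v = 1"

definition independent_set :: "'a set \<Rightarrow> ('a \<Rightarrow> 'a \<Rightarrow> bool) \<Rightarrow> 'a set \<Rightarrow> bool" where
  "independent_set V E S \<longleftrightarrow> S \<subseteq> V \<and> (\<forall>u\<in>S. \<forall>v\<in>S. \<not> E u v)"

definition dominating_set :: "'a set \<Rightarrow> ('a \<Rightarrow> 'a \<Rightarrow> bool) \<Rightarrow> 'a set \<Rightarrow> bool" where
  "dominating_set V E D \<longleftrightarrow> D \<subseteq> V \<and> (\<forall>v \<in> V - D. \<exists>u\<in>D. E v u)"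

definition domination_number :: "'a set \<Rightarrow> ('a \<Rightarrow> 'a \<Rightarrow> bool) \<Rightarrow> nat" where
  "domination_number V E = (LEAST k. \<exists>D. dominating_set V E D \<and> card D = k)"

definition gamma_set :: "'a set \<Rightarrow> ('a \<Rightarrow> 'a \<Rightarrow> bool) \<Rightarrow> 'a set \<Rightarrow> bool" where
  "gamma_set V E D \<longleftrightarrow> dominating_set V E D \<and> card D = domination_number V E"

definition certified_dominating_set :: "'a set \<Rightarrow> ('a \<Rightarrow> 'a \<Rightarrow> bool) \<Rightarrow> 'a set \<Rightarrow> bool" where
  "certified_dominating_set V E D \<longleftrightarrow> dominating_set V E D \<and>
     (\<forall>v\<in>D. card (neighbors V E v - D) = 0 \<or> card (neighbors V E v - D) \<ge> 2)"

definition certified_domination_number :: "'a set \<Rightarrow> ('a \<Rightarrow> 'a \<Rightarrow> bool) \<Rightarrow> nat" where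
  "certified_domination_number V E = (LEAST k. \<exists>D. certified_dominating_set V E D \<and> card D = k)"

end

theory Submission
  imports Defs
begin

text \<open>In an independent set D every neighbour of a vertex of D lies outside D, so the
  certification count of v \<in> D is just its degree, which for a non-leaf is 0 or \<ge> 2.
  Hence such a \<gamma>-set is certified, giving \<gamma>_cer \<le> \<gamma>, while every certified dominating set
  is dominating.\<close>

lemma neighbors_diff_independent_set:
  assumes "independent_set V E D" and "v \<in> D"
  shows "neighbors V E v - D = neighbors V E v"
  using assms unfolding independent_set_def neighbors_def by blast

lemma certified_dominating_set_if_independent_no_leaf:
  assumes "dominating_set V E D" and "independent_set V E D"
    and "\<forall>v\<in>D. \<not> is_leaf V E v"
  shows "certified_dominating_set V E D"
  unfolding certified_dominating_set_def
proof (intro conjI assms(1) ballI)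
  fix v assume "v \<in> D"
  then have "v \<in> V" and "degree V E v \<noteq> 1"
    using assms unfolding dominating_set_def is_leaf_def by auto
  then have "card (neighbors V E v - D) \<noteq> 1"
    using neighbors_diff_independent_set[OF assms(2) \<open>v \<in> D\<close>]
    unfolding degree_def by simp
  then show "card (neighbors V E v - D) = 0 \<or> card (neighbors V E v - D) \<ge> 2"
    by linarith
qed

lemma certified_dominating_set_vertex_set: "certified_dominating_set V E V"
proof -
  have "card (neighbors V E v - V) = 0" for v
    unfolding neighbors_def by (simp add: Diff_eq_empty_iff[THEN iffD2])
  then show ?thesis
    unfolding certified_dominating_set_def dominating_set_def by blast
qed

lemma certified_domination_number_le:
  assumes "certified_dominating_set V E D"
  shows "certified_domination_number V E \<le> card D"
  unfolding certified_domination_number_def using assms by (blast intro: Least_le)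

lemma domination_number_le:
  assumes "dominating_set V E D"
  shows "domination_number V E \<le> card D"
  unfolding domination_number_def using assms by (blast intro: Least_le)

lemma obtain_min_certified_dominating_set:
  obtains C where "certified_dominating_set V E C"
    and "card C = certified_domination_number V E"
  using LeastI_ex[of "\<lambda>k. \<exists>D. certified_dominating_set V E D \<and> card D = k"]
    certified_dominating_set_vertex_set
  unfolding certified_domination_number_def by blast

lemma domination_number_le_certified_domination_number:
  "domination_number V E \<le> certified_domination_number V E"
proof -
  obtain C where "certified_dominating_set V E C" "card C = certified_domination_number V E"
    by (rule obtain_min_certified_dominating_set)
  then show ?thesis
    using domination_number_le unfolding certified_dominating_set_def by metis
qed

theorem corollary2p2:
  fixes V :: "'a set" and E :: "'a \<Rightarrow> 'a \<Rightarrow> bool"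
  assumes "simple_graph V E"
    and "connected_graph V E"
    and "card V \<ge> 3"
    and "\<exists>D. gamma_set V E D \<and> independent_set V E D \<and> (\<forall>v\<in>D. \<not> is_leaf V E v)"
  shows "domination_number V E = certified_domination_number V E"
proof -
  obtain D where gamma: "gamma_set V E D" and "independent_set V E D"
    and "\<forall>v\<in>D. \<not> is_leaf V E v"
    using assms(4) by blast
  then have "certified_dominating_set V E D"
    using certified_dominating_set_if_independent_no_leaf unfolding gamma_set_def by blast
  then have "certified_domination_number V E \<le> domination_number V E"
    using certified_domination_number_le gamma unfolding gamma_set_def by metis
  then show ?thesis
    using domination_number_le_certified_domination_number by (rule antisym[rotated])
qed

end
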